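(* Let $U\in\mathsf{U}(\mathcal{H}_A\otimes\mathcal{H}_B)$ with $d_A=\dim\mathcal{H}_A$, $d_B=\dim\mathcal{H}_B$. The infimum of $2\|c\|_1^2-\|c\|_2^2$ over all decompositions $U=\sum_{j=1}^mc_jV_j\otimes W_j$ (with $m\ge1$ arbitrary, $c\in\mathbb{R}^m$, $V_j\in\mathsf{U}(\mathcal{H}_A)$, $W_j\in\mathsf{U}(\mathcal{H}_B)$) is attained, and it is attained by a decomposition with $m=2d_A^2d_B^2$ terms. *)

theory Defs
  imports "HOL-Analysis.Analysis"
begin

text \<open>Operators on a finite-dimensional Hilbert space with orthonormal basis indexed
  by the finite type 'n are represented as complex matrices complex^'n^'n.
  The tensor product H_A \<otimes> H_B has basis indexed by 'a \<times> 'b.\<close>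

definition adjoint_mat :: "complex^'n^'m \<Rightarrow> complex^'m^'n" where
  "adjoint_mat U = (\<chi> i j. cnj (U $ j $ i))"

definition unitary_mat :: "complex^'n^'n \<Rightarrow> bool" where
  "unitary_mat U \<longleftrightarrow> U ** adjoint_mat U = mat 1 \<and> adjoint_mat U ** U = mat 1"

definition kron :: "complex^'a^'a \<Rightarrow> complex^'b^'b \<Rightarrow> complex^('a \<times> 'b)^('a \<times> 'b)" where
  "kron V W = (\<chi> p q. V $ fst p $ fst q * W $ snd p $ snd q)"

definition is_decomp ::
  "complex^('a \<times> 'b)^('a \<times> 'b) \<Rightarrow> nat \<Rightarrow> (nat \<Rightarrow> real) \<Rightarrow> (nat \<Rightarrow> complex^'a^'a)
     \<Rightarrow> (nat \<Rightarrow> complex^'b^'b) \<Rightarrow> bool" where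
  "is_decomp U m c V W \<longleftrightarrow> m \<ge> 1 \<and> (\<forall>j<m. unitary_mat (V j) \<and> unitary_mat (W j)) \<and>
     U = (\<Sum>j<m. c j *\<^sub>R kron (V j) (W j))"

definition decomp_cost :: "nat \<Rightarrow> (nat \<Rightarrow> real) \<Rightarrow> real" where
  "decomp_cost m c = 2 * (\<Sum>j<m. \<bar>c j\<bar>)^2 - (\<Sum>j<m. (c j)^2)"

end

theory Submission
  imports Defs
begin

text \<open>Absorbing signs into the unitaries, a decomposition writes \<open>U\<close> as a nonnegative
  combination of the matrices \<open>V\<^sub>j \<otimes> W\<^sub>j\<close>, which live in a real vector space of dimension
  \<open>2 d\<^sub>A\<^sup>2 d\<^sub>B\<^sup>2\<close>. Along a line \<open>x + s d\<close> of coefficient vectors the cost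
  \<open>2 (\<Sum>x)\<^sup>2 - \<Sum>x\<^sup>2\<close> is quadratic in \<open>s\<close>, and at a nonnegative point its derivative can vanish
  only if the quadratic is concave. Hence moving along a linear relation among the terms until a
  coefficient vanishes never increases the cost, and, as in Caratheodory's theorem,
  \<open>2 d\<^sub>A\<^sup>2 d\<^sub>B\<^sup>2\<close> terms suffice. Decompositions with that many terms and bounded cost form a
  compact set (unitaries are bounded and \<open>\<parallel>c\<parallel>\<^sub>1\<^sup>2\<close> is at most the cost), on which the continuous
  cost attains its minimum.\<close>

section \<open>The cost along a line\<close>

definition cost_on :: "'i set \<Rightarrow> ('i \<Rightarrow> real) \<Rightarrow> real" where
  "cost_on J x = 2 * (\<Sum>j\<in>J. x j)^2 - (\<Sum>j\<in>J. (x j)^2)"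

definition cost_deriv :: "'i set \<Rightarrow> ('i \<Rightarrow> real) \<Rightarrow> ('i \<Rightarrow> real) \<Rightarrow> real" where
  "cost_deriv J x d = 4 * (\<Sum>j\<in>J. x j) * (\<Sum>j\<in>J. d j) - 2 * (\<Sum>j\<in>J. x j * d j)"

lemma sums_along_line:
  fixes x d :: "'i \<Rightarrow> real"
  shows "(\<Sum>j\<in>J. x j + s * d j) = (\<Sum>j\<in>J. x j) + s * (\<Sum>j\<in>J. d j)"
    "(\<Sum>j\<in>J. (x j + s * d j)^2) = (\<Sum>j\<in>J. (x j)^2) + 2 * s * (\<Sum>j\<in>J. x j * d j)
       + s^2 * (\<Sum>j\<in>J. (d j)^2)"
    "(\<Sum>j\<in>J. (x j + s * d j) * d j) = (\<Sum>j\<in>J. x j * d j) + s * (\<Sum>j\<in>J. (d j)^2)"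
  by (simp_all add: sum.distrib sum_distrib_left power2_eq_square algebra_simps)

lemma cost_on_line:
  "cost_on J (\<lambda>j. x j + s * d j) = cost_on J x + s * cost_deriv J x d + s^2 * cost_on J d"
  unfolding cost_on_def cost_deriv_def sums_along_line by (simp add: power2_eq_square algebra_simps)

lemma cost_deriv_line:
  "cost_deriv J (\<lambda>j. x j + s * d j) d = cost_deriv J x d + 2 * s * cost_on J d"
  unfolding cost_on_def cost_deriv_def sums_along_line by (simp add: power2_eq_square algebra_simps)

lemma cost_deriv_uminus: "cost_deriv J x (\<lambda>j. - d j) = - cost_deriv J x d"
  by (simp add: cost_deriv_def sum_negf)

lemma cost_on_cong: "(\<And>j. j \<in> J \<Longrightarrow> x j = y j) \<Longrightarrow> cost_on J x = cost_on J y"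
  by (simp add: cost_on_def)

lemma cost_on_restrict:
  assumes "finite J" "S \<subseteq> J" "\<forall>j\<in>J - S. x j = 0"
  shows "cost_on J x = cost_on S x"
proof -
  have "(\<Sum>j\<in>J. x j) = (\<Sum>j\<in>S. x j)" "(\<Sum>j\<in>J. (x j)^2) = (\<Sum>j\<in>S. (x j)^2)"
    using assms by (auto intro: sum.mono_neutral_right)
  then show ?thesis unfolding cost_on_def by simp
qed

lemma cost_on_reindex: "bij_betw h S T \<Longrightarrow> cost_on S (x \<circ> h) = cost_on T x"
  by (simp add: cost_on_def sum.reindex_bij_betw[of h S T, symmetric])

lemma sum_sq_le_sq_sum:
  fixes x :: "'i \<Rightarrow> real"
  assumes "finite J" "\<forall>j\<in>J. 0 \<le> x j"
  shows "(\<Sum>j\<in>J. (x j)^2) \<le> (\<Sum>j\<in>J. x j)^2"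
proof -
  have "(\<Sum>j\<in>J. (x j)^2) \<le> (\<Sum>j\<in>J. x j * (\<Sum>k\<in>J. x k))"
    using assms
    by (intro sum_mono) (auto simp: power2_eq_square intro: mult_left_mono member_le_sum)
  also have "\<dots> = (\<Sum>j\<in>J. x j)^2" by (simp add: power2_eq_square sum_distrib_right)
  finally show ?thesis .
qed

lemma sq_sum_le_cost_on:
  assumes "finite J" "\<forall>j\<in>J. 0 \<le> x j"
  shows "(\<Sum>j\<in>J. x j)^2 \<le> cost_on J x"
  using sum_sq_le_sq_sum[OF assms] by (simp add: cost_on_def)

lemma cost_on_nonpos_if_stationary:
  fixes x d :: "'i \<Rightarrow> real"
  assumes J: "finite J" and x: "\<forall>j\<in>J. 0 \<le> x j" and pos: "0 < (\<Sum>j\<in>J. x j)"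
    and stationary: "cost_deriv J x d = 0"
  shows "cost_on J d \<le> 0"
proof -
  have "J \<noteq> {}" using pos by auto
  obtain k where k: "k \<in> J" "Max ((\<lambda>j. \<bar>d j\<bar>) ` J) = \<bar>d k\<bar>"
    using obtains_MAX[OF J \<open>J \<noteq> {}\<close>] by blast
  have max: "\<bar>d j\<bar> \<le> \<bar>d k\<bar>" if "j \<in> J" for j
    using J that k(2) Max_ge[of "(\<lambda>j. \<bar>d j\<bar>) ` J"] by auto
  have "(\<Sum>j\<in>J. x j * d j) = (\<Sum>j\<in>J. x j) * (2 * (\<Sum>j\<in>J. d j))"
    using stationary by (simp add: cost_deriv_def) (simp add: algebra_simps)
  then have "(\<Sum>j\<in>J. x j) * (2 * \<bar>\<Sum>j\<in>J. d j\<bar>) = \<bar>\<Sum>j\<in>J. x j * d j\<bar>"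
    using pos by (simp add: abs_mult)
  also have "\<dots> \<le> (\<Sum>j\<in>J. x j * \<bar>d k\<bar>)"
    using x max by (intro order_trans[OF sum_abs] sum_mono) (simp add: abs_mult mult_left_mono)
  also have "\<dots> = (\<Sum>j\<in>J. x j) * \<bar>d k\<bar>" by (simp add: sum_distrib_right)
  finally have "2 * \<bar>\<Sum>j\<in>J. d j\<bar> \<le> \<bar>d k\<bar>" using pos by simp
  then have "(2 * \<bar>\<Sum>j\<in>J. d j\<bar>)^2 \<le> \<bar>d k\<bar>^2" by (rule power_mono) simp
  then have "4 * (\<Sum>j\<in>J. d j)^2 \<le> (d k)^2" by (simp add: power_mult_distrib)
  also have "\<dots> \<le> (\<Sum>j\<in>J. (d j)^2)" using J k(1) by (intro member_le_sum) simp_all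
  finally show ?thesis unfolding cost_on_def using zero_le_power2[of "\<Sum>j\<in>J. d j"] by linarith
qed

lemma exists_exit_time:
  fixes x d :: "'i \<Rightarrow> real"
  assumes J: "finite J" and x: "\<forall>j\<in>J. 0 < x j" and neg: "\<exists>j\<in>J. d j < 0"
  shows "\<exists>t>0. (\<exists>j\<in>J. x j + t * d j = 0) \<and>
           (\<forall>s\<ge>0. (\<forall>j\<in>J. 0 \<le> x j + s * d j) \<longleftrightarrow> s \<le> t)"
proof -
  define E where "E = (\<lambda>j. x j / - d j) ` {j\<in>J. d j < 0}"
  have E: "finite E" "E \<noteq> {}" using J neg by (auto simp: E_def)
  define t where "t = Min E"
  obtain j0 where j0: "j0 \<in> J" "d j0 < 0" "t = x j0 / - d j0"
    using Min_in[OF E] by (auto simp: t_def E_def)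
  have feasible_iff: "0 \<le> x j + s * d j \<longleftrightarrow> s \<le> x j / - d j" if "d j < 0" for j s
    using that by (subst pos_le_divide_eq) auto
  have "(\<forall>j\<in>J. 0 \<le> x j + s * d j) \<longleftrightarrow> s \<le> t" if "s \<ge> 0" for s
  proof -
    have "(\<forall>j\<in>J. 0 \<le> x j + s * d j) \<longleftrightarrow> (\<forall>e\<in>E. s \<le> e)"
    proof (intro iffI ballI)
      fix e assume "\<forall>j\<in>J. 0 \<le> x j + s * d j" "e \<in> E"
      then show "s \<le> e" using feasible_iff unfolding E_def by auto
    next
      fix j assume le: "\<forall>e\<in>E. s \<le> e" and "j \<in> J"
      show "0 \<le> x j + s * d j"
      proof (cases "d j < 0")
        case True
        then show ?thesis using le \<open>j \<in> J\<close> feasible_iff unfolding E_def by auto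
      next
        case False
        then show ?thesis using x \<open>j \<in> J\<close> \<open>s \<ge> 0\<close> by (simp add: add_pos_nonneg less_imp_le)
      qed
    qed
    also have "\<dots> \<longleftrightarrow> s \<le> t" unfolding t_def using E by simp
    finally show ?thesis .
  qed
  moreover have "x j0 + t * d j0 = 0" "t > 0" using j0 x by (auto simp: divide_pos_neg)
  ultimately show ?thesis using j0(1) by blast
qed

lemma cost_on_line_minimizer_not_nonneg:
  fixes x d :: "'i \<Rightarrow> real"
  assumes J: "finite J" and convex: "0 < cost_on J d"
    and avoids_0: "\<And>s. \<exists>j\<in>J. x j + s * d j \<noteq> 0"
  defines "s \<equiv> - cost_deriv J x d / (2 * cost_on J d)"
  shows "\<exists>j\<in>J. x j + s * d j < 0"
proof (rule ccontr)
  assume "\<not> ?thesis"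
  then have nonneg: "\<forall>j\<in>J. 0 \<le> x j + s * d j" by (simp add: not_less)
  obtain j where "j \<in> J" "x j + s * d j \<noteq> 0" using avoids_0 by blast
  then have "0 < (\<Sum>j\<in>J. x j + s * d j)" using J nonneg by (intro sum_pos2) auto
  moreover have "cost_deriv J (\<lambda>j. x j + s * d j) d = 0"
    using convex unfolding cost_deriv_line by (simp add: s_def)
  ultimately have "cost_on J d \<le> 0" using J nonneg by (intro cost_on_nonpos_if_stationary)
  then show False using convex by simp
qed

text \<open>If \<open>cost_on J d \<le> 0\<close> the cost is concave along \<open>d\<close> and keeps decreasing up to the
  exit time; otherwise its minimiser along \<open>d\<close> lies outside the orthant, hence beyond the exit
  time, and the cost decreases on the way there.\<close>

lemma cost_on_descent_to_boundary:
  fixes x d :: "'i \<Rightarrow> real"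
  assumes J: "finite J" and x: "\<forall>j\<in>J. 0 < x j" and d: "\<exists>j\<in>J. d j \<noteq> 0"
    and descent: "cost_deriv J x d \<le> 0"
    and avoids_0: "\<And>s. \<exists>j\<in>J. x j + s * d j \<noteq> 0"
  shows "\<exists>t. (\<forall>j\<in>J. 0 \<le> x j + t * d j) \<and> (\<exists>j\<in>J. x j + t * d j = 0) \<and>
           cost_on J (\<lambda>j. x j + t * d j) \<le> cost_on J x"
proof -
  define a where "a = cost_on J d"
  define b where "b = cost_deriv J x d"
  define s where "s = - b / (2 * a)"
  have s_nonneg: "s \<ge> 0" if "a > 0" using that descent by (simp add: s_def b_def divide_nonpos_pos)
  have infeasible: "\<exists>j\<in>J. x j + s * d j < 0" if "a > 0"
    using cost_on_line_minimizer_not_nonneg[OF J _ avoids_0] that by (simp add: s_def a_def b_def)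
  have "\<exists>j\<in>J. d j < 0"
  proof (rule ccontr)
    assume "\<not> ?thesis"
    then have d_nonneg: "\<forall>j\<in>J. 0 \<le> d j" by auto
    then have "0 < (\<Sum>j\<in>J. d j)" using J d by (metis order_le_less sum_pos2)
    then have "0 < (\<Sum>j\<in>J. d j)^2" by simp
    then have "a > 0" unfolding a_def using sq_sum_le_cost_on[OF J d_nonneg] by linarith
    then obtain j where "j \<in> J" "x j + s * d j < 0" using infeasible by blast
    moreover have "0 \<le> s * d j" using s_nonneg[OF \<open>a > 0\<close>] d_nonneg \<open>j \<in> J\<close> by simp
    moreover have "0 < x j" using x \<open>j \<in> J\<close> by blast
    ultimately show False by linarith
  qed
  then obtain t where "t > 0" and zero: "\<exists>j\<in>J. x j + t * d j = 0"
    and feasible_iff: "\<And>s. s \<ge> 0 \<Longrightarrow> (\<forall>j\<in>J. 0 \<le> x j + s * d j) \<longleftrightarrow> s \<le> t"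
    using exists_exit_time[OF J x] by blast
  have "b + t * a \<le> 0"
  proof (cases "a > 0")
    case True
    then have "\<not> (\<forall>j\<in>J. 0 \<le> x j + s * d j)" using infeasible by (auto simp: not_le)
    then have "t < s" using feasible_iff[OF s_nonneg[OF True]] by simp
    then have "b + t * a \<le> b + s * a" using True by simp
    also have "\<dots> = b / 2" using True by (simp add: s_def)
    finally show ?thesis using descent by (simp add: b_def)
  next
    case False
    then have "t * a \<le> 0" using \<open>t > 0\<close> by (simp add: mult_nonneg_nonpos)
    then show ?thesis using descent by (simp add: b_def)
  qed
  then have "t * (b + t * a) \<le> 0" using \<open>t > 0\<close> by (simp add: mult_nonneg_nonpos)
  then have "cost_on J (\<lambda>j. x j + t * d j) \<le> cost_on J x"
    by (simp add: cost_on_line a_def[symmetric] b_def[symmetric] power2_eq_square algebra_simps)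
  then show ?thesis using feasible_iff[of t] \<open>t > 0\<close> zero by auto
qed

lemma cost_on_move_to_boundary:
  fixes x d :: "'i \<Rightarrow> real"
  assumes J: "finite J" and x: "\<forall>j\<in>J. 0 < x j" and d: "\<exists>j\<in>J. d j \<noteq> 0"
    and avoids_0: "\<And>s. \<exists>j\<in>J. x j + s * d j \<noteq> 0"
  shows "\<exists>t. (\<forall>j\<in>J. 0 \<le> x j + t * d j) \<and> (\<exists>j\<in>J. x j + t * d j = 0) \<and>
           cost_on J (\<lambda>j. x j + t * d j) \<le> cost_on J x"
proof (cases "cost_deriv J x d \<le> 0")
  case True
  then show ?thesis using cost_on_descent_to_boundary[OF J x d _ avoids_0] by blast
next
  case False
  have "\<exists>t. (\<forall>j\<in>J. 0 \<le> x j + t * - d j) \<and> (\<exists>j\<in>J. x j + t * - d j = 0) \<and>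
          cost_on J (\<lambda>j. x j + t * - d j) \<le> cost_on J x"
    using False d avoids_0[of "- _"]
    by (intro cost_on_descent_to_boundary[OF J x]) (auto simp: cost_deriv_uminus)
  then obtain t where "(\<forall>j\<in>J. 0 \<le> x j + (- t) * d j) \<and> (\<exists>j\<in>J. x j + (- t) * d j = 0) \<and>
      cost_on J (\<lambda>j. x j + (- t) * d j) \<le> cost_on J x" by auto
  then show ?thesis by blast
qed

section \<open>Nonnegative combinations with few terms\<close>

lemma nontrivial_relation_if_card_gt_DIM:
  fixes M :: "'i \<Rightarrow> 'v::euclidean_space"
  assumes J: "finite J" and big: "DIM('v) < card J"
  shows "\<exists>\<alpha>. (\<exists>j\<in>J. \<alpha> j \<noteq> 0) \<and> (\<Sum>j\<in>J. \<alpha> j *\<^sub>R M j) = 0"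
proof (cases "inj_on M J")
  case True
  then have "dependent (M ` J)" using big by (intro dependent_biggerset) (simp_all add: card_image)
  then obtain u where u: "\<exists>v\<in>M ` J. u v \<noteq> 0" "(\<Sum>v\<in>M ` J. u v *\<^sub>R v) = 0"
    using dependent_finite[of "M ` J"] J by auto
  then have "(\<Sum>j\<in>J. u (M j) *\<^sub>R M j) = 0" by (simp add: sum.reindex[OF True])
  then show ?thesis using u(1) by (intro exI[of _ "u \<circ> M"]) auto
next
  case False
  then obtain j k where jk: "j \<in> J" "k \<in> J" "j \<noteq> k" "M j = M k" by (auto simp: inj_on_def)
  define \<alpha> where "\<alpha> = (\<lambda>i. if i = j then 1 else if i = k then -1 else (0::real))"
  have "(\<Sum>i\<in>J. \<alpha> i *\<^sub>R M i) = (\<Sum>i\<in>{j, k}. \<alpha> i *\<^sub>R M i)"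
    using J jk by (intro sum.mono_neutral_right) (auto simp: \<alpha>_def)
  also have "\<dots> = 0" using jk by (simp add: \<alpha>_def)
  finally show ?thesis using jk by (intro exI[of _ \<alpha>]) (auto simp: \<alpha>_def)
qed

lemma nonneg_combination_shrink_support:
  fixes M :: "'i \<Rightarrow> 'v::euclidean_space"
  assumes J: "finite J" and c: "\<forall>j\<in>J. 0 \<le> c j"
    and nonzero: "(\<Sum>j\<in>J. c j *\<^sub>R M j) \<noteq> 0"
    and big: "DIM('v) < card {j\<in>J. c j \<noteq> 0}"
  shows "\<exists>c'. (\<Sum>j\<in>J. c' j *\<^sub>R M j) = (\<Sum>j\<in>J. c j *\<^sub>R M j) \<and> (\<forall>j\<in>J. 0 \<le> c' j) \<and>
           card {j\<in>J. c' j \<noteq> 0} < card {j\<in>J. c j \<noteq> 0} \<and> cost_on J c' \<le> cost_on J c"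
proof -
  define S where "S = {j\<in>J. c j \<noteq> 0}"
  have S: "finite S" "S \<subseteq> J" and c_pos: "\<forall>j\<in>S. 0 < c j"
    using J c by (auto simp: S_def order_less_le)
  have sum_S: "(\<Sum>j\<in>S. y j *\<^sub>R M j) = (\<Sum>j\<in>J. y j *\<^sub>R M j)" if "\<forall>j\<in>J - S. y j = 0" for y
    using J S(2) that by (intro sum.mono_neutral_left) auto
  obtain \<alpha> where \<alpha>: "\<exists>j\<in>S. \<alpha> j \<noteq> 0" "(\<Sum>j\<in>S. \<alpha> j *\<^sub>R M j) = 0"
    using nontrivial_relation_if_card_gt_DIM[OF S(1) big[folded S_def]] by blast
  have line: "(\<Sum>j\<in>S. (c j + s * \<alpha> j) *\<^sub>R M j) = (\<Sum>j\<in>J. c j *\<^sub>R M j)" for s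
  proof -
    have "(\<Sum>j\<in>S. (c j + s * \<alpha> j) *\<^sub>R M j) = (\<Sum>j\<in>S. c j *\<^sub>R M j) + s *\<^sub>R (\<Sum>j\<in>S. \<alpha> j *\<^sub>R M j)"
      by (simp add: scaleR_add_left sum.distrib scaleR_sum_right)
    then show ?thesis using \<alpha>(2) sum_S[of c] by (simp add: S_def)
  qed
  have "\<exists>j\<in>S. c j + s * \<alpha> j \<noteq> 0" for s
    using line[of s] nonzero by (metis (no_types, lifting) scaleR_zero_left sum.neutral)
  then obtain t where t: "\<forall>j\<in>S. 0 \<le> c j + t * \<alpha> j" "\<exists>j\<in>S. c j + t * \<alpha> j = 0"
    "cost_on S (\<lambda>j. c j + t * \<alpha> j) \<le> cost_on S c"
    using cost_on_move_to_boundary[OF S(1) c_pos \<alpha>(1)] by blast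
  define c' where "c' = (\<lambda>j. if j \<in> S then c j + t * \<alpha> j else 0)"
  have "(\<Sum>j\<in>J. c' j *\<^sub>R M j) = (\<Sum>j\<in>J. c j *\<^sub>R M j)"
    using sum_S[of c'] line[of t] by (simp add: c'_def)
  moreover have "\<forall>j\<in>J. 0 \<le> c' j" using t(1) by (simp add: c'_def)
  moreover have "card {j\<in>J. c' j \<noteq> 0} < card S"
  proof -
    obtain j0 where "j0 \<in> S" "c' j0 = 0" using t(2) by (auto simp: c'_def)
    then have "{j\<in>J. c' j \<noteq> 0} \<subseteq> S - {j0}" by (auto simp: c'_def)
    then show ?thesis using S(1) \<open>j0 \<in> S\<close>
      by (meson card_Diff1_less card_mono finite_Diff order_le_less_trans)
  qed
  moreover have "cost_on J c' \<le> cost_on J c"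
  proof -
    have "cost_on J c' = cost_on S c'" using J S(2) by (intro cost_on_restrict) (auto simp: c'_def)
    also have "\<dots> = cost_on S (\<lambda>j. c j + t * \<alpha> j)" by (simp add: cost_on_def c'_def)
    also have "\<dots> \<le> cost_on S c" by (rule t(3))
    also have "\<dots> = cost_on J c"
      using J S(2) by (intro cost_on_restrict[symmetric]) (auto simp: S_def)
    finally show ?thesis .
  qed
  ultimately show ?thesis unfolding S_def by blast
qed

lemma nonneg_combination_reduce_support:
  fixes M :: "'i \<Rightarrow> 'v::euclidean_space"
  assumes "finite J" "\<forall>j\<in>J. 0 \<le> c j" "(\<Sum>j\<in>J. c j *\<^sub>R M j) \<noteq> 0"
  shows "\<exists>c'. (\<Sum>j\<in>J. c' j *\<^sub>R M j) = (\<Sum>j\<in>J. c j *\<^sub>R M j) \<and> (\<forall>j\<in>J. 0 \<le> c' j) \<and>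
           card {j\<in>J. c' j \<noteq> 0} \<le> DIM('v) \<and> cost_on J c' \<le> cost_on J c"
  using assms(2,3)
proof (induction "card {j\<in>J. c j \<noteq> 0}" arbitrary: c rule: less_induct)
  case less
  show ?case
  proof (cases "card {j\<in>J. c j \<noteq> 0} \<le> DIM('v)")
    case True
    then show ?thesis using less.prems by blast
  next
    case False
    then obtain c1 where c1: "(\<Sum>j\<in>J. c1 j *\<^sub>R M j) = (\<Sum>j\<in>J. c j *\<^sub>R M j)" "\<forall>j\<in>J. 0 \<le> c1 j"
      "card {j\<in>J. c1 j \<noteq> 0} < card {j\<in>J. c j \<noteq> 0}" "cost_on J c1 \<le> cost_on J c"
      using nonneg_combination_shrink_support[OF assms(1) less.prems] by (auto simp: not_le)
    then show ?thesis using less.hyps[OF c1(3) c1(2)] less.prems(2) by fastforce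
  qed
qed

section \<open>Unitary matrices and their span\<close>

lemma unitary_mat_iff: "unitary_mat U \<longleftrightarrow> U ** adjoint_mat U = mat 1"
  by (simp add: unitary_mat_def matrix_left_right_inverse)

lemma adjoint_mat_mult: "adjoint_mat (A ** B) = adjoint_mat B ** adjoint_mat A"
  by (simp add: adjoint_mat_def matrix_matrix_mult_def vec_eq_iff mult.commute)

lemma unitary_mat_mult:
  assumes "unitary_mat A" "unitary_mat B"
  shows "unitary_mat (A ** B)"
proof -
  have "A ** B ** adjoint_mat (A ** B) = A ** (B ** adjoint_mat B) ** adjoint_mat A"
    by (simp add: adjoint_mat_mult matrix_mul_assoc)
  then show ?thesis using assms by (simp add: unitary_mat_iff)
qed

lemma adjoint_mat_one: "adjoint_mat (mat 1) = mat 1"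
  by (simp add: adjoint_mat_def mat_def vec_eq_iff)

lemma unitary_mat_one: "unitary_mat (mat 1)"
  by (simp add: unitary_mat_def adjoint_mat_one)

lemma unitary_mat_uminus: "unitary_mat A \<Longrightarrow> unitary_mat (- A)"
  by (simp add: unitary_mat_def adjoint_mat_def matrix_matrix_mult_def vec_eq_iff)

lemma unitary_mat_nonzero:
  fixes U :: "complex^'n^'n"
  shows "unitary_mat U \<Longrightarrow> U \<noteq> 0"
proof
  assume "unitary_mat U" "U = 0"
  then have "(mat 1 :: complex^'n^'n) $ i $ i = 0" for i by (simp add: unitary_mat_def)
  then show False by (simp add: mat_def)
qed

lemma norm_unitary_mat_row:
  assumes "unitary_mat U" shows "norm (U $ i) = 1"
proof -
  have "1 = (U ** adjoint_mat U) $ i $ i" using assms by (simp add: unitary_mat_def mat_def)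
  also have "\<dots> = of_real (\<Sum>k\<in>UNIV. (norm (U $ i $ k))^2)"
    by (simp add: matrix_matrix_mult_def adjoint_mat_def complex_mult_cnj cmod_def)
  finally have "(\<Sum>k\<in>UNIV. (norm (U $ i $ k))^2) = 1" by (metis of_real_eq_1_iff)
  then show ?thesis by (simp add: norm_vec_def L2_set_def)
qed

lemma norm_unitary_mat:
  fixes U :: "complex^'n^'n"
  assumes "unitary_mat U" shows "norm U = sqrt CARD('n)"
  using norm_unitary_mat_row[OF assms] by (simp add: norm_vec_def L2_set_def)

lemma kron_uminus_left: "kron (- V) W = - kron V W"
  by (simp add: kron_def vec_eq_iff)

definition perm_mat :: "('n \<Rightarrow> 'n) \<Rightarrow> complex^'n^'n" where
  "perm_mat p = (\<chi> i j. if j = p i then 1 else 0)"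

definition phase_mat :: "'n \<Rightarrow> complex \<Rightarrow> complex^'n^'n" where
  "phase_mat a w = (\<chi> i j. if i = j then (if i = a then w else 1) else 0)"

lemma linear_image_span_subset:
  assumes "linear f" "f ` S \<subseteq> span T" "x \<in> span S"
  shows "f x \<in> span T"
proof -
  have "f x \<in> span (f ` S)" using assms(1,3) by (simp add: span_linear_image)
  also have "\<dots> \<subseteq> span T" using assms(2) by (metis span_mono span_span)
  finally show ?thesis .
qed

lemma linear_matrix_mult_right: "linear (\<lambda>X :: complex^'n^'m. X ** P)"
  by (rule linearI) (simp_all add: vec_eq_iff matrix_matrix_mult_def sum.distrib distrib_right
      scaleR_sum_right)

lemma linear_kron_left: "linear (\<lambda>X. kron X W)"
  by (rule linearI) (simp_all add: vec_eq_iff kron_def distrib_right)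

lemma linear_kron_right: "linear (\<lambda>Y. kron X Y)"
  by (rule linearI) (simp_all add: vec_eq_iff kron_def distrib_left)

lemma kron_in_span_kron:
  assumes "X \<in> span A" "Y \<in> span B"
  shows "kron X Y \<in> span {kron V W | V W. V \<in> A \<and> W \<in> B}"
proof -
  have "kron X W \<in> span {kron V W | V W. V \<in> A \<and> W \<in> B}" if "W \<in> B" for W
    using that
    by (intro linear_image_span_subset[OF linear_kron_left _ assms(1)]) (auto intro: span_base)
  then show ?thesis by (intro linear_image_span_subset[OF linear_kron_right _ assms(2)]) auto
qed

lemma unitary_perm_mat:
  assumes "inj p" shows "unitary_mat (perm_mat p)"
proof -
  have "(perm_mat p ** adjoint_mat (perm_mat p)) $ i $ j = (if p i = p j then 1 else 0)" for i j
    by (simp add: perm_mat_def adjoint_mat_def matrix_matrix_mult_def if_distrib[of cnj]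
        if_distrib[of "\<lambda>x. x * _"] cong: if_cong)
  then show ?thesis using assms by (simp add: unitary_mat_iff vec_eq_iff mat_def inj_eq)
qed

lemma unitary_phase_mat:
  assumes "w * cnj w = 1" shows "unitary_mat (phase_mat a w)"
proof -
  have "(phase_mat a w ** adjoint_mat (phase_mat a w)) $ i $ j = (if i = j then 1 else 0)" for i j
    using assms
    by (simp add: phase_mat_def adjoint_mat_def matrix_matrix_mult_def if_distrib[of cnj]
        if_distrib[of "\<lambda>x. x * _"] cong: if_cong)
  then show ?thesis by (simp add: unitary_mat_iff vec_eq_iff mat_def)
qed

lemma matrix_unit_diag_1: "axis a (axis a 1) = (1/2) *\<^sub>R (mat 1 - phase_mat a (-1))"
  by (auto simp: vec_eq_iff axis_def mat_def phase_mat_def complex_eq_iff)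

lemma matrix_unit_diag_ii:
  "axis a (axis a \<i>) = phase_mat a \<i> - (1/2) *\<^sub>R (mat 1 + phase_mat a (-1))"
  by (auto simp: vec_eq_iff axis_def mat_def phase_mat_def complex_eq_iff)

lemma matrix_unit_eq_mult_perm_mat:
  "axis a (axis b z) = axis a (axis a z) ** perm_mat (Transposition.transpose a b)"
  by (auto simp: vec_eq_iff axis_def perm_mat_def matrix_matrix_mult_def
      if_distrib[of "\<lambda>x. x * _"] if_distrib[of "\<lambda>x. x $ _"] cong: if_cong)

lemma span_unitary_mat: "span {V :: complex^'n^'n. unitary_mat V} = UNIV"
proof -
  let ?K = "{V :: complex^'n^'n. unitary_mat V}"
  let ?S = "span ?K"
  have unitary: "V \<in> ?S" if "unitary_mat V" for V using that by (simp add: span_base)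
  have diag: "axis a (axis a z) \<in> ?S" if "z = 1 \<or> z = \<i>" for a :: 'n and z
    using that unitary[OF unitary_mat_one] unitary[OF unitary_phase_mat, of "-1"]
      unitary[OF unitary_phase_mat, of \<i>]
    by (auto simp: matrix_unit_diag_1 matrix_unit_diag_ii intro!: span_diff span_add span_scale)
  have "b \<in> span ?K" if "b \<in> Basis" for b
  proof -
    obtain a c z where b: "b = axis a (axis c z)" and z: "z = 1 \<or> z = \<i>"
      using \<open>b \<in> Basis\<close> by (auto simp: Basis_vec_def Basis_complex_def)
    show ?thesis unfolding b matrix_unit_eq_mult_perm_mat[of a c] using z
      by (intro linear_image_span_subset[OF linear_matrix_mult_right _ diag])
        (auto intro!: unitary unitary_mat_mult unitary_perm_mat bij_is_inj)
  qed
  then have "span Basis \<subseteq> span ?K" by (intro span_minimal) auto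
  then show ?thesis by auto
qed

lemma span_kron_unitary_mat:
  "span {kron V W | V W.
      unitary_mat (V :: complex^'a::finite^'a) \<and> unitary_mat (W :: complex^'b::finite^'b)} = UNIV"
proof -
  let ?K = "{kron V W | V W. unitary_mat (V :: complex^'a^'a) \<and> unitary_mat (W :: complex^'b^'b)}"
  have "b \<in> span ?K" if "b \<in> Basis" for b
  proof -
    obtain p q z where "b = axis p (axis q z)"
      using \<open>b \<in> Basis\<close> by (auto simp: Basis_vec_def)
    then have "b = kron (axis (fst p) (axis (fst q) z)) (axis (snd p) (axis (snd q) 1))"
      by (auto simp: vec_eq_iff kron_def axis_def prod_eq_iff)
    then show ?thesis using kron_in_span_kron[of _ "Collect unitary_mat" _ "Collect unitary_mat"]
      by (simp add: span_unitary_mat)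
  qed
  then have "span Basis \<subseteq> span ?K" by (intro span_minimal) auto
  then show ?thesis by auto
qed

section \<open>Decompositions over a finite index set\<close>

definition decomp_on ::
  "'i set \<Rightarrow> complex^('a \<times> 'b)^('a \<times> 'b) \<Rightarrow> ('i \<Rightarrow> real) \<Rightarrow> ('i \<Rightarrow> complex^'a^'a)
     \<Rightarrow> ('i \<Rightarrow> complex^'b^'b) \<Rightarrow> bool" where
  "decomp_on J U c V W \<longleftrightarrow> (\<forall>j\<in>J. unitary_mat (V j) \<and> unitary_mat (W j)) \<and>
     U = (\<Sum>j\<in>J. c j *\<^sub>R kron (V j) (W j))"

lemma is_decomp_iff_decomp_on: "is_decomp U m c V W \<longleftrightarrow> 1 \<le> m \<and> decomp_on {..<m} U c V W"
  by (auto simp: is_decomp_def decomp_on_def)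

lemma decomp_cost_eq_cost_on: "decomp_cost m c = cost_on {..<m} (\<lambda>j. \<bar>c j\<bar>)"
  by (simp add: decomp_cost_def cost_on_def)

lemma decomp_on_reindex:
  assumes "bij_betw h J K" "decomp_on K U c V W"
  shows "decomp_on J U (c \<circ> h) (V \<circ> h) (W \<circ> h)"
  using assms sum.reindex_bij_betw[OF assms(1), of "\<lambda>j. c j *\<^sub>R kron (V j) (W j)"]
  by (auto simp: decomp_on_def bij_betw_apply)

lemma decomp_on_abs:
  assumes "decomp_on J U c V W"
  shows "decomp_on J U (\<lambda>j. \<bar>c j\<bar>) (\<lambda>j. if c j < 0 then - V j else V j) W"
  using assms unfolding decomp_on_def
  by (auto simp: unitary_mat_uminus kron_uminus_left intro!: sum.cong)

lemma decomp_on_extend: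
  assumes "finite K" "J \<subseteq> K" "decomp_on J U c V W"
  shows "decomp_on K U (\<lambda>j. if j \<in> J then c j else 0) (\<lambda>j. if j \<in> J then V j else mat 1)
           (\<lambda>j. if j \<in> J then W j else mat 1)"
  using assms unfolding decomp_on_def
  by (auto simp: unitary_mat_one if_distrib[of "\<lambda>x. x *\<^sub>R _"] sum.If_cases Int_absorb1)

lemma DIM_tensor_matrix:
  "DIM(complex^('a::finite \<times> 'b::finite)^('a \<times> 'b)) = 2 * CARD('a)^2 * CARD('b)^2"
  by (simp add: power2_eq_square)

lemma exists_decomp_on:
  fixes U :: "complex^('a::finite \<times> 'b::finite)^('a \<times> 'b)"
  obtains J :: "(complex^('a \<times> 'b)^('a \<times> 'b)) set" and c V W
  where "finite J" "decomp_on J U c V W"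
proof -
  let ?K = "{kron V W | V W. unitary_mat (V :: complex^'a^'a) \<and> unitary_mat (W :: complex^'b^'b)}"
  obtain J r where J: "finite J" "J \<subseteq> ?K" and U: "U = (\<Sum>X\<in>J. r X *\<^sub>R X)"
    using span_kron_unitary_mat[where 'a='a and 'b='b] unfolding span_explicit by blast
  have "\<forall>X\<in>J. \<exists>VW. unitary_mat (fst VW) \<and> unitary_mat (snd VW) \<and> X = kron (fst VW) (snd VW)"
    using J(2) by force
  then obtain VW where VW: "\<forall>X\<in>J. unitary_mat (fst (VW X)) \<and> unitary_mat (snd (VW X)) \<and>
      X = kron (fst (VW X)) (snd (VW X))" by metis
  have "decomp_on J U r (fst \<circ> VW) (snd \<circ> VW)"
    unfolding decomp_on_def U using VW by (auto intro!: sum.cong)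
  then show ?thesis using J(1) that by blast
qed

lemma is_decomp_if_decomp_on_card_le:
  assumes K: "finite K" and N: "card K \<le> N" "1 \<le> N" and D: "decomp_on K U c V W"
  shows "\<exists>c' V' W'. is_decomp U N c' V' W' \<and> decomp_cost N c' = cost_on K (\<lambda>j. \<bar>c j\<bar>)"
proof -
  obtain g where g: "bij_betw g {..<card K} K"
    using ex_bij_betw_nat_finite[OF K] by (auto simp: atLeast0LessThan)
  define c' where "c' = (\<lambda>j. if j \<in> {..<card K} then (c \<circ> g) j else 0)"
  have "decomp_on {..<N} U c' (\<lambda>j. if j \<in> {..<card K} then (V \<circ> g) j else mat 1)
      (\<lambda>j. if j \<in> {..<card K} then (W \<circ> g) j else mat 1)"
    unfolding c'_def using N by (intro decomp_on_extend decomp_on_reindex[OF g D]) auto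
  moreover have "decomp_cost N c' = cost_on K (\<lambda>j. \<bar>c j\<bar>)"
  proof -
    have "decomp_cost N c' = cost_on {..<card K} (\<lambda>j. \<bar>c' j\<bar>)"
      unfolding decomp_cost_eq_cost_on using N by (intro cost_on_restrict) (auto simp: c'_def)
    also have "\<dots> = cost_on {..<card K} ((\<lambda>j. \<bar>c j\<bar>) \<circ> g)" by (simp add: cost_on_def c'_def)
    also have "\<dots> = cost_on K (\<lambda>j. \<bar>c j\<bar>)" by (rule cost_on_reindex[OF g])
    finally show ?thesis .
  qed
  ultimately show ?thesis using N(2) unfolding is_decomp_iff_decomp_on by blast
qed

lemma exists_DIM_term_decomp_le_cost:
  fixes U :: "complex^('a::finite \<times> 'b::finite)^('a \<times> 'b)"
  assumes U: "U \<noteq> 0" and J: "finite J" and D: "decomp_on J U c V W"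
  shows "\<exists>c' V' W'. is_decomp U (2 * CARD('a)^2 * CARD('b)^2) c' V' W' \<and>
           decomp_cost (2 * CARD('a)^2 * CARD('b)^2) c' \<le> cost_on J (\<lambda>j. \<bar>c j\<bar>)"
proof -
  define V1 where "V1 = (\<lambda>j. if c j < 0 then - V j else V j)"
  have D1: "decomp_on J U (\<lambda>j. \<bar>c j\<bar>) V1 W" using decomp_on_abs[OF D] by (simp add: V1_def)
  have U1: "U = (\<Sum>j\<in>J. \<bar>c j\<bar> *\<^sub>R kron (V1 j) (W j))" using D1 by (simp add: decomp_on_def)
  obtain c2 where c2: "(\<Sum>j\<in>J. c2 j *\<^sub>R kron (V1 j) (W j)) = U" "\<forall>j\<in>J. 0 \<le> c2 j"
      "card {j\<in>J. c2 j \<noteq> 0} \<le> 2 * CARD('a)^2 * CARD('b)^2" "cost_on J c2 \<le> cost_on J (\<lambda>j. \<bar>c j\<bar>)"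
    using nonneg_combination_reduce_support[OF J, of "\<lambda>j. \<bar>c j\<bar>" "\<lambda>j. kron (V1 j) (W j)"] U
    unfolding U1 DIM_tensor_matrix by auto
  define K where "K = {j\<in>J. c2 j \<noteq> 0}"
  have K: "finite K" "K \<subseteq> J" using J by (auto simp: K_def)
  have "(\<Sum>j\<in>K. c2 j *\<^sub>R kron (V1 j) (W j)) = U"
    using c2(1) J K(2) by (subst (asm) sum.mono_neutral_right[of J K]) (auto simp: K_def)
  then have "decomp_on K U c2 V1 W" using D1 K(2) unfolding decomp_on_def by auto
  moreover have "cost_on K (\<lambda>j. \<bar>c2 j\<bar>) = cost_on J c2"
  proof -
    have "cost_on K (\<lambda>j. \<bar>c2 j\<bar>) = cost_on K c2"
      using K(2) c2(2) by (intro cost_on_cong) auto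
    also have "\<dots> = cost_on J c2"
      using J K(2) by (intro cost_on_restrict[symmetric]) (auto simp: K_def)
    finally show ?thesis .
  qed
  ultimately show ?thesis
    using is_decomp_if_decomp_on_card_le[OF K(1) c2(3)[folded K_def]] c2(4) by fastforce
qed

section \<open>Existence of an optimal decomposition\<close>

lemma continuous_on_matrix_mult [continuous_intros]:
  fixes f :: "'x::topological_space \<Rightarrow> complex^'n^'m" and g :: "'x \<Rightarrow> complex^'k^'n"
  assumes "continuous_on S f" "continuous_on S g"
  shows "continuous_on S (\<lambda>x. f x ** g x)"
  unfolding matrix_matrix_mult_def using assms by (intro continuous_intros)

lemma continuous_on_adjoint_mat [continuous_intros]:
  fixes f :: "'x::topological_space \<Rightarrow> complex^'n^'m"
  assumes "continuous_on S f"
  shows "continuous_on S (\<lambda>x. adjoint_mat (f x))"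
  unfolding adjoint_mat_def using assms by (intro continuous_intros)

lemma continuous_on_kron [continuous_intros]:
  fixes f :: "'x::topological_space \<Rightarrow> complex^'a^'a" and g :: "'x \<Rightarrow> complex^'b^'b"
  assumes "continuous_on S f" "continuous_on S g"
  shows "continuous_on S (\<lambda>x. kron (f x) (g x))"
  unfolding kron_def using assms by (intro continuous_intros)

lemma closed_unitary_mat_preimage:
  fixes f :: "'x::topological_space \<Rightarrow> complex^'n^'n"
  assumes "continuous_on UNIV f"
  shows "closed {x. unitary_mat (f x)}"
  unfolding unitary_mat_def using assms
  by (intro closed_Collect_conj closed_Collect_eq continuous_intros)

lemma norm_vec_unitary_mat:
  fixes V :: "(complex^'n^'n)^'i"
  assumes "\<And>i. unitary_mat (V $ i)"
  shows "norm V = sqrt (real CARD('i) * real CARD('n))"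
  unfolding norm_vec_def[of V] L2_set_def using assms by (simp add: norm_unitary_mat)

definition bounded_cost_decomps ::
  "complex^('a \<times> 'b)^('a \<times> 'b) \<Rightarrow> real
     \<Rightarrow> ((real^'i) \<times> ((complex^'a^'a)^'i) \<times> ((complex^'b^'b)^'i)) set" where
  "bounded_cost_decomps U C = {x.
     decomp_on UNIV U (\<lambda>i. fst x $ i) (\<lambda>i. fst (snd x) $ i) (\<lambda>i. snd (snd x) $ i) \<and>
     cost_on UNIV (\<lambda>i. \<bar>fst x $ i\<bar>) \<le> C}"

lemma compact_bounded_cost_decomps:
  fixes U :: "complex^('a::finite \<times> 'b::finite)^('a \<times> 'b)"
  shows "compact (bounded_cost_decomps U C :: ((real^'i) \<times> ((complex^'a^'a)^'i) \<times> _) set)"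
proof -
  let ?F = "bounded_cost_decomps U C :: ((real^'i) \<times> ((complex^'a^'a)^'i) \<times> _) set"
  have "closed ?F"
    unfolding bounded_cost_decomps_def decomp_on_def ball_UNIV
    by (intro closed_Collect_conj closed_Collect_all closed_unitary_mat_preimage closed_Collect_eq
        closed_Collect_le continuous_intros) (simp_all add: cost_on_def continuous_intros)
  moreover have
    "norm x \<le> sqrt C + sqrt (real CARD('i) * real CARD('a)) + sqrt (real CARD('i) * real CARD('b))"
    if "x \<in> ?F" for x
  proof -
    obtain c V W where x: "x = (c, V, W)" by (cases x) auto
    have "(\<Sum>i\<in>UNIV. \<bar>c $ i\<bar>)^2 \<le> C"
      using that sq_sum_le_cost_on[of UNIV "\<lambda>i. \<bar>c $ i\<bar>"] by (simp add: x bounded_cost_decomps_def)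
    then have "norm c \<le> sqrt C" using norm_le_l1_cart[of c] real_le_rsqrt by fastforce
    moreover have "norm V = sqrt (real CARD('i) * real CARD('a))"
      and "norm W = sqrt (real CARD('i) * real CARD('b))"
      using that
      by (auto simp: x bounded_cost_decomps_def decomp_on_def intro!: norm_vec_unitary_mat)
    moreover have "norm x \<le> norm c + (norm V + norm W)"
      using norm_Pair_le[of c "(V, W)"] norm_Pair_le[of V W] by (simp add: x)
    ultimately show ?thesis by simp
  qed
  then have "bounded ?F" unfolding bounded_iff by blast
  ultimately show ?thesis by (simp add: compact_eq_bounded_closed)
qed

lemma exists_optimal_decomp_on_UNIV:
  fixes U :: "complex^('a::finite \<times> 'b::finite)^('a \<times> 'b)"
  assumes "decomp_on (UNIV :: 'i::finite set) U c0 V0 W0"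
  shows "\<exists>c V W. decomp_on (UNIV :: 'i set) U c V W \<and>
           (\<forall>c' V' W'. decomp_on (UNIV :: 'i set) U c' V' W' \<longrightarrow>
              cost_on UNIV (\<lambda>i. \<bar>c i\<bar>) \<le> cost_on UNIV (\<lambda>i. \<bar>c' i\<bar>))"
proof -
  define C where "C = cost_on UNIV (\<lambda>i. \<bar>c0 i\<bar>)"
  define F :: "((real^'i) \<times> ((complex^'a^'a)^'i) \<times> ((complex^'b^'b)^'i)) set"
    where "F = bounded_cost_decomps U C"
  define cost where "cost x = cost_on UNIV (\<lambda>i. \<bar>fst x $ i\<bar>)"
    for x :: "(real^'i) \<times> ((complex^'a^'a)^'i) \<times> ((complex^'b^'b)^'i)"
  have in_F: "((\<chi> i. c i), (\<chi> i. V i), (\<chi> i. W i)) \<in> F"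
    if "decomp_on UNIV U c V W" "cost_on UNIV (\<lambda>i. \<bar>c i\<bar>) \<le> C" for c V W
    using that
    unfolding F_def bounded_cost_decomps_def mem_Collect_eq fst_conv snd_conv
      vec_lambda_inverse[OF UNIV_I]
    by blast
  have "continuous_on F cost" unfolding cost_def cost_on_def by (intro continuous_intros)
  moreover have "compact F" unfolding F_def by (rule compact_bounded_cost_decomps)
  moreover have "F \<noteq> {}" using in_F[OF assms] by (auto simp: C_def)
  ultimately obtain x where x: "x \<in> F" and min: "\<And>y. y \<in> F \<Longrightarrow> cost x \<le> cost y"
    using continuous_attains_inf[of F cost] by blast
  have "cost_on UNIV (\<lambda>i. \<bar>fst x $ i\<bar>) \<le> cost_on UNIV (\<lambda>i. \<bar>c' i\<bar>)"
    if "decomp_on (UNIV :: 'i set) U c' V' W'" for c' V' W'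
  proof (cases "cost_on UNIV (\<lambda>i. \<bar>c' i\<bar>) \<le> C")
    case True
    then show ?thesis using min[OF in_F[OF that True]] by (simp add: cost_def)
  next
    case False
    then show ?thesis using x by (simp add: F_def bounded_cost_decomps_def)
  qed
  moreover have "decomp_on UNIV U (\<lambda>i. fst x $ i) (\<lambda>i. fst (snd x) $ i) (\<lambda>i. snd (snd x) $ i)"
    using x by (simp add: F_def bounded_cost_decomps_def)
  ultimately show ?thesis by (intro exI conjI allI impI)
qed

lemma exists_optimal_is_decomp:
  assumes N: "CARD('i::finite) = N" and D: "is_decomp U N c0 V0 W0"
  shows "\<exists>c V W. is_decomp U N c V W \<and>
           (\<forall>c' V' W'. is_decomp U N c' V' W' \<longrightarrow> decomp_cost N c \<le> decomp_cost N c')"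
proof -
  obtain e :: "nat \<Rightarrow> 'i" where e: "bij_betw e {..<N} UNIV"
    using ex_bij_betw_nat_finite[of "UNIV :: 'i set"] N by (auto simp: atLeast0LessThan)
  define e' where "e' = inv_into {..<N} e"
  have e': "bij_betw e' UNIV {..<N}" unfolding e'_def by (rule bij_betw_inv_into[OF e])
  have to_UNIV: "decomp_on UNIV U (c \<circ> e') (V \<circ> e') (W \<circ> e') \<and>
      cost_on UNIV (\<lambda>i. \<bar>(c \<circ> e') i\<bar>) = decomp_cost N c" if "is_decomp U N c V W" for c V W
  proof
    show "decomp_on UNIV U (c \<circ> e') (V \<circ> e') (W \<circ> e')"
      using that by (intro decomp_on_reindex[OF e']) (simp add: is_decomp_iff_decomp_on)
    show "cost_on UNIV (\<lambda>i. \<bar>(c \<circ> e') i\<bar>) = decomp_cost N c"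
      using cost_on_reindex[OF e', of "\<lambda>j. \<bar>c j\<bar>"] by (simp add: decomp_cost_eq_cost_on comp_def)
  qed
  obtain c V W where c: "decomp_on (UNIV :: 'i set) U c V W"
    and min: "\<forall>c' V' W'. decomp_on (UNIV :: 'i set) U c' V' W' \<longrightarrow>
                cost_on UNIV (\<lambda>i. \<bar>c i\<bar>) \<le> cost_on UNIV (\<lambda>i. \<bar>c' i\<bar>)"
    using exists_optimal_decomp_on_UNIV[OF conjunct1[OF to_UNIV[OF D]]] by blast
  have "is_decomp U N (c \<circ> e) (V \<circ> e) (W \<circ> e)"
    using decomp_on_reindex[OF e c] D by (simp add: is_decomp_iff_decomp_on)
  moreover have cost: "decomp_cost N (c \<circ> e) = cost_on UNIV (\<lambda>i. \<bar>c i\<bar>)"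
    using cost_on_reindex[OF e, of "\<lambda>i. \<bar>c i\<bar>"] by (simp add: decomp_cost_eq_cost_on comp_def)
  moreover have "decomp_cost N (c \<circ> e) \<le> decomp_cost N c'" if "is_decomp U N c' V' W'" for c' V' W'
    using min to_UNIV[OF that] cost by metis
  ultimately show ?thesis by blast
qed

theorem mainTheorem12:
  fixes U :: "complex^('a::finite \<times> 'b::finite)^('a \<times> 'b)"
  assumes "unitary_mat U"
  shows "\<exists>c V W. is_decomp U (2 * CARD('a)^2 * CARD('b)^2) c V W \<and>
           (\<forall>m c' V' W'. is_decomp U m c' V' W' \<longrightarrow>
              decomp_cost (2 * CARD('a)^2 * CARD('b)^2) c \<le> decomp_cost m c')"
proof -
  let ?N = "2 * CARD('a)^2 * CARD('b)^2"
  have U: "U \<noteq> 0" using assms by (rule unitary_mat_nonzero)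
  obtain J :: "(complex^('a \<times> 'b)^('a \<times> 'b)) set" and c V W
    where "finite J" "decomp_on J U c V W" by (rule exists_decomp_on)
  then obtain c0 V0 W0 where "is_decomp U ?N c0 V0 W0"
    using exists_DIM_term_decomp_le_cost[OF U] by blast
  moreover have "CARD(('a \<times> 'b) \<times> ('a \<times> 'b) \<times> bool) = ?N" by (simp add: power2_eq_square)
  ultimately obtain c V W where D: "is_decomp U ?N c V W"
    and min: "\<forall>c' V' W'. is_decomp U ?N c' V' W' \<longrightarrow> decomp_cost ?N c \<le> decomp_cost ?N c'"
    using exists_optimal_is_decomp by blast
  have "decomp_cost ?N c \<le> decomp_cost m c'" if "is_decomp U m c' V' W'" for m c' V' W'
  proof -
    have "decomp_on {..<m} U c' V' W'" using that by (simp add: is_decomp_iff_decomp_on)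
    then obtain c'' V'' W'' where "is_decomp U ?N c'' V'' W''"
      and "decomp_cost ?N c'' \<le> decomp_cost m c'"
      unfolding decomp_cost_eq_cost_on[of m]
      using exists_DIM_term_decomp_le_cost[OF U finite_lessThan] by blast
    then show ?thesis using min by fastforce
  qed
  then show ?thesis using D by blast
qed

end
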